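(* Let $K\ge 1$. There is an $\alpha$-approximation algorithm for ring grooming restricted to $K$-quasi-uniform instances, with $\alpha=\max(2K,\,12\sqrt{2K})$: namely, given a $K$-quasi-uniform instance with $d=\max_{j\ne k}d_{jk}$, applying Algorithm A to the uniform instance obtained by replacing every $d_{jk}$ ($j\ne k$) by $d$ yields a feasible routing of the original instance whose number of ADMs is at most $\alpha\, m$, where $m$ is the minimum number of ADMs of the original instance.
   Context: Ring grooming. An instance consists of integers $n\ge 2$ (ring size) and $c\ge 1$ (capacity), and a finite list $L$ of unordered pairs $\{j,k\}$ with $j\ne k$, $j,k\in\{1,\dots,n\}$ (repetitions allowed); these are the traffic demands. Let $d_{jk}=d_{kj}$ be the number of times $\{j,k\}$ occurs in $L$. Let $C_n$ be the cycle graph on vertices $1,\dots,n$ in cyclic order. A solution uses some finite number of "rings", each a copy of $C_n$ with capacity $c$ on every edge. A routing specifies, for every ring $i$ and every pair $j<k$, nonnegative integers $t^0_{ijk},t^1_{ijk}$ (amounts of $\{j,k\}$-traffic on ring $i$ along each of the two arcs of $C_n$ between $j$ and $k$); it is feasible if $\sum_i(t^0_{ijk}+t^1_{ijk})=d_{jk}$ for all $j<k$ and on every ring every edge carries total traffic at most $c$. Ring $i$ needs an ADM at vertex $j$ iff some traffic with endpoint $j$ is routed on ring $i$; the cost is the total number of ADMs, and $m$ is the minimum cost. An instance is $K$-quasi-uniform if $d_{jk}\ge1$ for all $j\ne k$ and $d_{jk}/d_{j'k'}\le K$ for all $j\ne k$, $j'\ne k'$. A feasible routing for the uniform instance restricts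 (by reducing the routed amounts) to a feasible routing of the original instance with no more ADMs. Algorithm A (uniform traffic $d$, $f=d/(2c)$). If $f\ge 1$: for each pair $j<k$, use $\lceil f\rceil$ rings on which only $\{j,k\}$-traffic is routed. If $f<1$: let $M=\lfloor\sqrt{2/f}\rfloor$ if $2\le\lfloor\sqrt{2/f}\rfloor\le n$, $M=2$ if $\lfloor\sqrt{2/f}\rfloor<2$, and $M=n$ if $\lfloor\sqrt{2/f}\rfloor>n$. Let $\mu=\lfloor M/2\rfloor$ and let $F$ be a family of $\lceil n/\mu\rceil$ subsets of $\{1,\dots,n\}$, each of size $\mu$, covering $\{1,\dots,n\}$. For each unordered pair of distinct members of $F$, form a block equal to their union, enlarged if necessary by arbitrary further vertices to exactly $M$ elements (if $F$ has one member, the single block is $\{1,\dots,n\}$); discard duplicates. For each block in turn, create a ring and route on it all not-yet-routed demands between block vertices, $\lfloor d/2\rfloor$ units on the longer arc and $\lceil d/2\rceil$ on the shorter arc. Finally discard ADMs at which no traffic terminates. *)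

theory Defs
  imports Complex_Main
begin

text \<open>Vertices of the ring C_n are 1..n; edge e (1 <= e <= n) joins
  e and (e mod n) + 1. For a pair j < k, arc 0 is the arc j, j+1, ..., k, i.e. it uses
  the edges e with j <= e < k; arc 1 is the complementary arc (the other edges).\<close>

record routing =
  rings :: nat
  tr0 :: "nat \<Rightarrow> nat \<Rightarrow> nat \<Rightarrow> nat"   \<comment> \<open>tr0 R i j k: traffic of pair {j,k} (j<k) on ring i along arc 0\<close>
  tr1 :: "nat \<Rightarrow> nat \<Rightarrow> nat \<Rightarrow> nat"   \<comment> \<open>along arc 1\<close>

definition pairs :: "nat \<Rightarrow> (nat \<times> nat) set" where
  "pairs n = {(j, k). 1 \<le> j \<and> j < k \<and> k \<le> n}"

definition dem :: "(nat \<times> nat) list \<Rightarrow> nat \<Rightarrow> nat \<Rightarrow> nat" where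
  "dem L j k = length (filter (\<lambda>(a, b). {a, b} = {j, k}) L)"

definition valid_instance :: "nat \<Rightarrow> nat \<Rightarrow> (nat \<times> nat) list \<Rightarrow> bool" where
  "valid_instance n c L \<longleftrightarrow> n \<ge> 2 \<and> c \<ge> 1 \<and>
     (\<forall>(a, b) \<in> set L. a \<noteq> b \<and> a \<in> {1..n} \<and> b \<in> {1..n})"

definition load :: "nat \<Rightarrow> routing \<Rightarrow> nat \<Rightarrow> nat \<Rightarrow> nat" where
  "load n R i e = (\<Sum>(j, k) \<in> pairs n. if j \<le> e \<and> e < k then tr0 R i j k else tr1 R i j k)"

definition feasible :: "nat \<Rightarrow> nat \<Rightarrow> (nat \<Rightarrow> nat \<Rightarrow> nat) \<Rightarrow> routing \<Rightarrow> bool" where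
  "feasible n c dm R \<longleftrightarrow>
     (\<forall>(j, k) \<in> pairs n. (\<Sum>i < rings R. tr0 R i j k + tr1 R i j k) = dm j k) \<and>
     (\<forall>i < rings R. \<forall>e \<in> {1..n}. load n R i e \<le> c)"

definition adm :: "nat \<Rightarrow> routing \<Rightarrow> nat \<Rightarrow> nat \<Rightarrow> bool" where
  "adm n R i v \<longleftrightarrow> (\<exists>(j, k) \<in> pairs n. (v = j \<or> v = k) \<and> tr0 R i j k + tr1 R i j k > 0)"

definition cost :: "nat \<Rightarrow> routing \<Rightarrow> nat" where
  "cost n R = (\<Sum>i < rings R. card {v \<in> {1..n}. adm n R i v})"

definition min_cost :: "nat \<Rightarrow> nat \<Rightarrow> (nat \<times> nat) list \<Rightarrow> nat" where
  "min_cost n c L = (LEAST x. \<exists>R. feasible n c (dem L) R \<and> cost n R = x)"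

definition quasi_uniform :: "nat \<Rightarrow> real \<Rightarrow> (nat \<times> nat) list \<Rightarrow> bool" where
  "quasi_uniform n K L \<longleftrightarrow>
     (\<forall>j \<in> {1..n}. \<forall>k \<in> {1..n}. j \<noteq> k \<longrightarrow> dem L j k \<ge> 1) \<and>
     (\<forall>j \<in> {1..n}. \<forall>k \<in> {1..n}. \<forall>j' \<in> {1..n}. \<forall>k' \<in> {1..n}.
        j \<noteq> k \<longrightarrow> j' \<noteq> k' \<longrightarrow> real (dem L j k) / real (dem L j' k') \<le> K)"

definition reduces :: "routing \<Rightarrow> routing \<Rightarrow> bool" where
  "reduces R' R \<longleftrightarrow> rings R' = rings R \<and>
     (\<forall>i j k. tr0 R' i j k \<le> tr0 R i j k \<and> tr1 R' i j k \<le> tr1 R i j k)"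

text \<open>Split of d units of a pair j<k: floor(d/2) on the longer arc, ceil(d/2) on the
  shorter arc (either way if both arcs have equal length).\<close>
definition arc_split :: "nat \<Rightarrow> nat \<Rightarrow> nat \<Rightarrow> nat \<Rightarrow> nat \<Rightarrow> nat \<Rightarrow> bool" where
  "arc_split n d j k a0 a1 \<longleftrightarrow>
     (if k - j > n - (k - j) then a0 = d div 2 \<and> a1 = d - d div 2
      else if k - j < n - (k - j) then a0 = d - d div 2 \<and> a1 = d div 2
      else (a0 = d div 2 \<and> a1 = d - d div 2) \<or> (a0 = d - d div 2 \<and> a1 = d div 2))"

definition algM :: "nat \<Rightarrow> real \<Rightarrow> nat" where
  "algM n f = (let s = \<lfloor>sqrt (2 / f)\<rfloor> in
     if s < 2 then 2 else if s > int n then n else nat s)"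

text \<open>algA n c d R: R is a possible output of Algorithm A on the uniform instance with
  demand d for every pair (all arbitrary choices of the algorithm are quantified).\<close>
definition algA :: "nat \<Rightarrow> nat \<Rightarrow> nat \<Rightarrow> routing \<Rightarrow> bool" where
  "algA n c d R \<longleftrightarrow>
    (let f = real d / (2 * real c) in
     if f \<ge> 1 then
       (let g = nat \<lceil>f\<rceil>; a = (\<lambda>q. min (2 * c) (d - 2 * c * q)) in
        \<exists>ps. distinct ps \<and> set ps = pairs n \<and> rings R = length ps * g \<and>
          (\<forall>i j k. tr0 R i j k =
               (if i < rings R \<and> (j, k) = ps ! (i div g) then a (i mod g) div 2 else 0)) \<and>
          (\<forall>i j k. tr1 R i j k =
               (if i < rings R \<and> (j, k) = ps ! (i div g) then a (i mod g) - a (i mod g) div 2 else 0)))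
     else
       (let M = algM n f; \<mu> = M div 2 in
        \<exists>F E bl.
          finite F \<and> card F = nat \<lceil>real n / real \<mu>\<rceil> \<and>
          (\<forall>A \<in> F. A \<subseteq> {1..n} \<and> card A = \<mu>) \<and> \<Union>F = {1..n} \<and>
          (\<forall>A \<in> F. \<forall>B \<in> F. A \<noteq> B \<longrightarrow>
              A \<union> B \<subseteq> E {A, B} \<and> E {A, B} \<subseteq> {1..n} \<and> card (E {A, B}) = M) \<and>
          distinct bl \<and>
          set bl = (if card F = 1 then {{1..n}}
                    else {E {A, B} | A B. A \<in> F \<and> B \<in> F \<and> A \<noteq> B}) \<and>
          rings R = length bl \<and>
          (\<forall>i j k.
             (if i < rings R \<and> (j, k) \<in> pairs n \<and> j \<in> bl ! i \<and> k \<in> bl ! i \<and>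
                 \<not> (\<exists>i' < i. j \<in> bl ! i' \<and> k \<in> bl ! i')
              then arc_split n d j k (tr0 R i j k) (tr1 R i j k)
              else tr0 R i j k = 0 \<and> tr1 R i j k = 0))))"

end

theory Submission
  imports Defs
begin

text \<open>
  Fix a ring with ADM set \<open>A\<close> and add up the loads of the edges \<open>u \<in> A\<close> (edge \<open>u\<close>
  joins \<open>u\<close> and \<open>u + 1\<close>); the sum is at most \<open>c |A|\<close>. Both endpoints of a routed pair lie in \<open>A\<close>,
  a unit routed along an arc covering more than \<open>H\<close> of these edges contributes more than \<open>H\<close>, and
  at most \<open>2 H |A|\<close> pairs have an arc covering at most \<open>H\<close> of them. Hence the ring carries at most
  \<open>|A| (2 H D + c / (H + 1))\<close> units of a uniform demand \<open>D\<close>. With \<open>P = n (n - 1) / 2\<close> pairs,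
  \<open>H = 0\<close> gives \<open>P D \<le> c m\<close> and \<open>H + 1 = ceil (sqrt (c / (2 D)))\<close> gives \<open>(P D)^2 \<le> 8 m^2 c D\<close> for
  the optimum \<open>m\<close>; also \<open>n \<le> m\<close>. A \<open>K\<close>-quasi-uniform instance with maximal demand \<open>d\<close> contains
  the uniform one with \<open>D = ceil (d / K)\<close>.

  If \<open>d \<ge> 2 c\<close>, Algorithm A uses \<open>2 P ceil (d / (2 c)) \<le> 2 P d / c \<le> 2 K m\<close> ADMs.
  Otherwise each ring serves a block of \<open>M \<approx> sqrt (4 c / d)\<close> vertices; an edge then carries the
  halves \<open>d div 2\<close> of at most \<open>M (M - 1) / 2\<close> pairs and the odd units of at most \<open>M^2 / 4\<close> pairs
  (those separated by the edge and its antipode), at most \<open>c\<close> in total. There are at most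
  \<open>(ceil (n / (M div 2)) choose 2)\<close> blocks, so the cost is at most \<open>12 P / (M + 1)\<close>, which the quadratic
  lower bound turns into \<open>12 sqrt (2 K) m\<close>; the boundary cases \<open>M = 2\<close> and \<open>M = n\<close> are covered by
  \<open>P D \<le> c m\<close> and \<open>n \<le> m\<close>.
\<close>

lemma mem_pairs_iff: "(j, k) \<in> pairs n \<longleftrightarrow> 1 \<le> j \<and> j < k \<and> k \<le> n"
  by (simp add: pairs_def)

lemma finite_pairs [simp]: "finite (pairs n)"
  by (rule finite_subset[of _ "{1..n} \<times> {1..n}"]) (auto simp: pairs_def)

lemma card_pairs: "2 * card (pairs n) = n * (n - 1)"
proof (induction n)
  case 0
  have "pairs 0 = {}" by (auto simp: pairs_def)
  then show ?case by simp
next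
  case (Suc n)
  have split: "pairs (Suc n) = pairs n \<union> (\<lambda>j. (j, Suc n)) ` {1..n}"
    by (auto simp: pairs_def)
  have "card (pairs (Suc n)) = card (pairs n) + n"
    unfolding split by (subst card_Un_disjoint) (auto simp: card_image inj_on_def mem_pairs_iff)
  with Suc show ?case by (cases n) (simp_all add: algebra_simps)
qed

lemma real_nat_ceiling_less: "0 \<le> x \<Longrightarrow> real (nat \<lceil>x\<rceil>) < x + 1"
  by linarith

lemma feasible_demand:
  "feasible n c dm R \<Longrightarrow> (j, k) \<in> pairs n \<Longrightarrow> (\<Sum>i < rings R. tr0 R i j k + tr1 R i j k) = dm j k"
  unfolding feasible_def by blast

lemma feasible_load: "feasible n c dm R \<Longrightarrow> i < rings R \<Longrightarrow> e \<in> {1..n} \<Longrightarrow> load n R i e \<le> c"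
  unfolding feasible_def by blast

section \<open>Reducing demands\<close>

lemma exists_le_sum_eq:
  fixes x :: "'a \<Rightarrow> nat"
  assumes "finite I" and "t \<le> sum x I"
  shows "\<exists>y. (\<forall>a. y a \<le> x a) \<and> sum y I = t"
  using assms
proof (induction I arbitrary: t rule: finite_induct)
  case empty
  then show ?case by (intro exI[of _ "\<lambda>_. 0"]) auto
next
  case (insert a I)
  show ?case
  proof (cases "t \<le> sum x I")
    case True
    with insert obtain y where "\<forall>a. y a \<le> x a" "sum y I = t" by blast
    with insert show ?thesis by (intro exI[of _ "y(a := 0)"]) (auto intro!: sum.cong)
  next
    case False
    from insert.IH[of "sum x I"] obtain y where y: "\<forall>a. y a \<le> x a" "sum y I = sum x I" by blast
    have "sum (y(a := t - sum x I)) I = sum y I"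
      using insert.hyps by (intro sum.cong) auto
    with insert y False show ?thesis by (intro exI[of _ "y(a := t - sum x I)"]) auto
  qed
qed

lemma reduces_load_le: "reduces R' R \<Longrightarrow> load n R' i e \<le> load n R i e"
  unfolding load_def reduces_def by (intro sum_mono) auto

lemma reduces_adm:
  assumes red: "reduces R' R" and "adm n R' i v"
  shows "adm n R i v"
proof -
  from \<open>adm n R' i v\<close> obtain j k where jk: "(j, k) \<in> pairs n" "v = j \<or> v = k"
    and "0 < tr0 R' i j k + tr1 R' i j k"
    unfolding adm_def by auto
  moreover have "tr0 R' i j k + tr1 R' i j k \<le> tr0 R i j k + tr1 R i j k"
    using red by (simp add: reduces_def add_mono)
  ultimately have "0 < tr0 R i j k + tr1 R i j k"
    by linarith
  with jk show ?thesis
    unfolding adm_def by blast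
qed

lemma reduces_cost_le:
  assumes red: "reduces R' R"
  shows "cost n R' \<le> cost n R"
proof -
  have "rings R' = rings R"
    using red by (simp add: reduces_def)
  moreover have "{v \<in> {1..n}. adm n R' i v} \<subseteq> {v \<in> {1..n}. adm n R i v}" for i
    using reduces_adm[OF red] by blast
  ultimately show ?thesis
    unfolding cost_def by (auto intro!: sum_mono card_mono)
qed

lemma feasible_reduce:
  assumes F: "feasible n c dm R" and le: "\<forall>(j, k) \<in> pairs n. dm' j k \<le> dm j k"
  shows "\<exists>R'. reduces R' R \<and> feasible n c dm' R' \<and> cost n R' \<le> cost n R"
proof -
  define r where "r = rings R"
  have "\<exists>y. (\<forall>i. y i \<le> tr0 R i j k + tr1 R i j k) \<and> (\<Sum>i<r. y i) = dm' j k"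
    if "(j, k) \<in> pairs n" for j k
  proof (rule exists_le_sum_eq)
    have "dm' j k \<le> dm j k"
      using le that by blast
    also have "dm j k = (\<Sum>i<r. tr0 R i j k + tr1 R i j k)"
      using feasible_demand[OF F that] unfolding r_def ..
    finally show "dm' j k \<le> (\<Sum>i<r. tr0 R i j k + tr1 R i j k)" .
  qed simp
  then obtain Y where Y_le: "\<And>j k i. (j, k) \<in> pairs n \<Longrightarrow> Y j k i \<le> tr0 R i j k + tr1 R i j k"
    and Y_sum: "\<And>j k. (j, k) \<in> pairs n \<Longrightarrow> (\<Sum>i<r. Y j k i) = dm' j k"
    by metis
  define R' where "R' = \<lparr>rings = r,
     tr0 = (\<lambda>i j k. if (j, k) \<in> pairs n then min (Y j k i) (tr0 R i j k) else 0),
     tr1 = (\<lambda>i j k. if (j, k) \<in> pairs n then Y j k i - min (Y j k i) (tr0 R i j k) else 0)\<rparr>"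
  have red: "reduces R' R"
    unfolding reduces_def R'_def r_def using Y_le by (auto simp: le_diff_conv min_def add.commute)
  have "(\<Sum>i < rings R'. tr0 R' i j k + tr1 R' i j k) = dm' j k" if "(j, k) \<in> pairs n" for j k
    using that Y_sum by (simp add: R'_def)
  moreover have "load n R' i e \<le> c" if "i < rings R'" "e \<in> {1..n}" for i e
  proof -
    have "load n R i e \<le> c"
      using feasible_load[OF F] that red unfolding reduces_def by auto
    then show ?thesis using reduces_load_le[OF red, of n i e] by linarith
  qed
  ultimately have "feasible n c dm' R'"
    unfolding feasible_def by blast
  with red reduces_cost_le show ?thesis by blast
qed

section \<open>Lower bounds for uniform demand\<close>

definition adms :: "nat \<Rightarrow> routing \<Rightarrow> nat \<Rightarrow> nat set" where
  "adms n R i = {v \<in> {1..n}. adm n R i v}"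

lemma cost_eq_sum_adms: "cost n R = (\<Sum>i < rings R. card (adms n R i))"
  by (simp add: cost_def adms_def)

lemma finite_adms [simp]: "finite (adms n R i)"
  by (simp add: adms_def)

lemma routed_pair_in_adms:
  assumes "(j, k) \<in> pairs n" and "0 < tr0 R i j k + tr1 R i j k"
  shows "j \<in> adms n R i" "k \<in> adms n R i"
proof -
  have "adm n R i j" "adm n R i k"
    using assms unfolding adm_def by blast+
  then show "j \<in> adms n R i" "k \<in> adms n R i"
    using assms(1) by (auto simp: adms_def mem_pairs_iff)
qed

lemma card_le_by_chain_key:
  fixes key :: "'a \<Rightarrow> 'b" and S :: "'a \<Rightarrow> 'c set"
  assumes "finite A"
    and key: "\<And>x. x \<in> X \<Longrightarrow> key x \<in> A"
    and S: "\<And>x. x \<in> X \<Longrightarrow> finite (S x) \<and> S x \<noteq> {} \<and> card (S x) \<le> H"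
    and chain: "\<And>x y. x \<in> X \<Longrightarrow> y \<in> X \<Longrightarrow> key x = key y \<Longrightarrow> x = y \<or> S x \<subset> S y \<or> S y \<subset> S x"
  shows "card X \<le> card A * H"
proof -
  let ?f = "\<lambda>x. (key x, card (S x))"
  have "inj_on ?f X"
  proof (rule inj_onI)
    fix x y assume "x \<in> X" "y \<in> X" "?f x = ?f y"
    with chain[of x y] S show "x = y"
      by (metis fst_conv snd_conv psubset_card_mono less_irrefl)
  qed
  moreover have "?f ` X \<subseteq> A \<times> {1..H}"
    using key S by (auto simp: Suc_le_eq card_gt_0_iff)
  ultimately have "card X \<le> card (A \<times> {1..H})"
    using \<open>finite A\<close> by (intro card_inj_on_le) auto
  then show ?thesis by (simp add: card_cartesian_product)
qed

lemma card_short_arc_pairs: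
  assumes "finite A"
  shows "card {(j, k) \<in> pairs n. j \<in> A \<and> k \<in> A \<and>
      (card (A \<inter> {j..<k}) \<le> H \<or> card (A - {j..<k}) \<le> H)} \<le> 2 * card A * H"
proof -
  define X0 where "X0 = {(j, k) \<in> pairs n. j \<in> A \<and> k \<in> A \<and> card (A \<inter> {j..<k}) \<le> H}"
  define X1 where "X1 = {(j, k) \<in> pairs n. j \<in> A \<and> k \<in> A \<and> card (A - {j..<k}) \<le> H}"
  have "card X0 \<le> card A * H"
  proof (rule card_le_by_chain_key[OF assms, where key = fst and S = "\<lambda>(j, k). A \<inter> {j..<k}"])
    fix x y assume "x \<in> X0" "y \<in> X0" "fst x = fst y"
    then obtain j k k' where "x = (j, k)" "y = (j, k')" "k \<in> A" "k' \<in> A" "j < k" "j < k'"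
      unfolding X0_def mem_pairs_iff by auto
    then show "x = y \<or> (case x of (j, k) \<Rightarrow> A \<inter> {j..<k}) \<subset> (case y of (j, k) \<Rightarrow> A \<inter> {j..<k}) \<or>
        (case y of (j, k) \<Rightarrow> A \<inter> {j..<k}) \<subset> (case x of (j, k) \<Rightarrow> A \<inter> {j..<k})"
      by (cases k k' rule: linorder_cases) auto
  qed (use assms in \<open>auto simp: X0_def mem_pairs_iff\<close>)
  moreover have "card X1 \<le> card A * H"
  proof (rule card_le_by_chain_key[OF assms, where key = snd and S = "\<lambda>(j, k). A - {j..<k}"])
    fix x y assume "x \<in> X1" "y \<in> X1" "snd x = snd y"
    then obtain j j' k where "x = (j, k)" "y = (j', k)" "j \<in> A" "j' \<in> A" "j < k" "j' < k"
      unfolding X1_def mem_pairs_iff by auto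
    then show "x = y \<or> (case x of (j, k) \<Rightarrow> A - {j..<k}) \<subset> (case y of (j, k) \<Rightarrow> A - {j..<k}) \<or>
        (case y of (j, k) \<Rightarrow> A - {j..<k}) \<subset> (case x of (j, k) \<Rightarrow> A - {j..<k})"
      by (cases j j' rule: linorder_cases)
        (auto dest: arg_cong[where f = "\<lambda>S. j \<in> S"] arg_cong[where f = "\<lambda>S. j' \<in> S"])
  qed (use assms in \<open>auto simp: X1_def mem_pairs_iff\<close>)
  moreover have "card (X0 \<union> X1) \<le> card X0 + card X1"
    by (rule card_Un_le)
  moreover have "{(j, k) \<in> pairs n. j \<in> A \<and> k \<in> A \<and>
      (card (A \<inter> {j..<k}) \<le> H \<or> card (A - {j..<k}) \<le> H)} = X0 \<union> X1"
    unfolding X0_def X1_def by auto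
  ultimately show ?thesis by simp
qed

lemma sum_load_eq:
  assumes "finite A"
  shows "(\<Sum>u\<in>A. load n R i u) = (\<Sum>(j, k) \<in> pairs n.
      card (A \<inter> {j..<k}) * tr0 R i j k + card (A - {j..<k}) * tr1 R i j k)"
proof -
  have "(\<Sum>u\<in>A. load n R i u) =
      (\<Sum>(j, k) \<in> pairs n. \<Sum>u\<in>A. if u \<in> {j..<k} then tr0 R i j k else tr1 R i j k)"
    unfolding load_def case_prod_unfold atLeastLessThan_iff by (rule sum.swap)
  also have "\<dots> = (\<Sum>(j, k) \<in> pairs n.
      card (A \<inter> {j..<k}) * tr0 R i j k + card (A - {j..<k}) * tr1 R i j k)"
    using assms by (intro sum.cong) (auto simp: sum.If_cases Int_def Diff_eq)
  finally show ?thesis .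
qed

lemma pair_traffic_le:
  assumes jk: "(j, k) \<in> pairs n" and "tr0 R i j k + tr1 R i j k \<le> D" and A: "A = adms n R i"
  shows "(H + 1) * (tr0 R i j k + tr1 R i j k)
    \<le> (if j \<in> A \<and> k \<in> A \<and> (card (A \<inter> {j..<k}) \<le> H \<or> card (A - {j..<k}) \<le> H) then (H + 1) * D else 0)
      + (card (A \<inter> {j..<k}) * tr0 R i j k + card (A - {j..<k}) * tr1 R i j k)"
proof (cases "tr0 R i j k + tr1 R i j k = 0")
  case False
  then have "j \<in> A" "k \<in> A"
    using routed_pair_in_adms[OF jk] unfolding A by auto
  show ?thesis
  proof (cases "card (A \<inter> {j..<k}) \<le> H \<or> card (A - {j..<k}) \<le> H")
    case True
    have "(H + 1) * (tr0 R i j k + tr1 R i j k) \<le> (H + 1) * D"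
      using \<open>tr0 R i j k + tr1 R i j k \<le> D\<close> by (rule mult_le_mono2)
    with True \<open>j \<in> A\<close> \<open>k \<in> A\<close> show ?thesis
      by simp
  next
    case False
    then have "(H + 1) * tr0 R i j k + (H + 1) * tr1 R i j k
        \<le> card (A \<inter> {j..<k}) * tr0 R i j k + card (A - {j..<k}) * tr1 R i j k"
      by (intro add_mono mult_right_mono) auto
    with False show ?thesis
      by (simp add: algebra_simps)
  qed
qed simp

lemma ring_traffic_le:
  assumes load: "\<forall>e \<in> {1..n}. load n R i e \<le> c"
    and dem: "\<forall>(j, k) \<in> pairs n. tr0 R i j k + tr1 R i j k \<le> D"
  shows "(H + 1) * (\<Sum>(j, k) \<in> pairs n. tr0 R i j k + tr1 R i j k)
    \<le> card (adms n R i) * (2 * H * (H + 1) * D + c)"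
proof -
  define A where "A = adms n R i"
  define Q where "Q = {(j, k) \<in> pairs n. j \<in> A \<and> k \<in> A \<and>
      (card (A \<inter> {j..<k}) \<le> H \<or> card (A - {j..<k}) \<le> H)}"
  define w where "w j k = card (A \<inter> {j..<k}) * tr0 R i j k + card (A - {j..<k}) * tr1 R i j k"
    for j k
  have pair: "(H + 1) * (tr0 R i j k + tr1 R i j k)
      \<le> (if (j, k) \<in> Q then (H + 1) * D else 0) + w j k"
    if jk: "(j, k) \<in> pairs n" for j k
    using pair_traffic_le[OF jk _ A_def, of D H] dem jk unfolding Q_def w_def by auto
  have "(H + 1) * (\<Sum>(j, k) \<in> pairs n. tr0 R i j k + tr1 R i j k)
      \<le> (\<Sum>(j, k) \<in> pairs n. (if (j, k) \<in> Q then (H + 1) * D else 0) + w j k)"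
    unfolding sum_distrib_left case_prod_unfold by (intro sum_mono) (metis pair prod.collapse)
  also have "\<dots> = card Q * ((H + 1) * D) + (\<Sum>u\<in>A. load n R i u)"
    unfolding sum_load_eq[OF finite_adms[of n R i, folded A_def]] w_def case_prod_unfold
    by (simp add: sum.distrib sum.If_cases Int_absorb1 Q_def subset_iff)
  also have "\<dots> \<le> (2 * card A * H) * ((H + 1) * D) + card A * c"
  proof (intro add_mono mult_right_mono)
    show "card Q \<le> 2 * card A * H"
      unfolding Q_def by (rule card_short_arc_pairs) (simp add: A_def)
    show "(\<Sum>u\<in>A. load n R i u) \<le> card A * c"
      using sum_bounded_above[of A "load n R i" c] load by (auto simp: A_def adms_def)
  qed simp
  finally show ?thesis
    unfolding A_def by (simp add: algebra_simps)
qed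

lemma uniform_cost_lower_bound:
  assumes F: "feasible n c (\<lambda>j k. D) R"
  shows "(H + 1) * (card (pairs n) * D) \<le> cost n R * (2 * H * (H + 1) * D + c)"
proof -
  define T where "T i = (\<Sum>(j, k) \<in> pairs n. tr0 R i j k + tr1 R i j k)" for i
  have "card (pairs n) * D = (\<Sum>p \<in> pairs n. D)"
    by simp
  also have "\<dots> = (\<Sum>(j, k) \<in> pairs n. \<Sum>i < rings R. tr0 R i j k + tr1 R i j k)"
    using feasible_demand[OF F] by (intro sum.cong) auto
  also have "\<dots> = (\<Sum>i < rings R. T i)"
    unfolding T_def case_prod_unfold by (rule sum.swap)
  finally have "(H + 1) * (card (pairs n) * D) = (\<Sum>i < rings R. (H + 1) * T i)"
    by (simp add: sum_distrib_left)
  also have "\<dots> \<le> (\<Sum>i < rings R. card (adms n R i) * (2 * H * (H + 1) * D + c))"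
  proof (intro sum_mono)
    fix i assume i: "i \<in> {..<rings R}"
    have "tr0 R i j k + tr1 R i j k \<le> D" if "(j, k) \<in> pairs n" for j k
    proof -
      have "tr0 R i j k + tr1 R i j k \<le> (\<Sum>i' < rings R. tr0 R i' j k + tr1 R i' j k)"
        using i by (intro member_le_sum) auto
      with feasible_demand[OF F that] show ?thesis by simp
    qed
    with feasible_load[OF F] i show "(H + 1) * T i \<le> card (adms n R i) * (2 * H * (H + 1) * D + c)"
      unfolding T_def by (intro ring_traffic_le) auto
  qed
  also have "\<dots> = cost n R * (2 * H * (H + 1) * D + c)"
    by (simp add: cost_eq_sum_adms sum_distrib_right)
  finally show ?thesis .
qed

lemma nat_balancing_exists:
  fixes x :: real
  assumes "0 < x"
  obtains H :: nat where "2 * real H * (real H + 1) + 2 * x\<^sup>2 \<le> (real H + 1) * (4 * x)"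
proof
  define H where "H = nat \<lceil>x\<rceil> - 1"
  have "1 \<le> nat \<lceil>x\<rceil>"
    using assms by (simp add: Suc_le_eq)
  then have "real H + 1 = real (nat \<lceil>x\<rceil>)"
    unfolding H_def by (simp add: of_nat_diff)
  then have "real H < x" and "x \<le> real H + 1"
    using assms real_nat_ceiling_less[of x] real_nat_ceiling_ge[of x] by linarith+
  then have "2 * real H * (real H + 1) \<le> 2 * x * (real H + 1)" and "2 * x\<^sup>2 \<le> 2 * x * (real H + 1)"
    using assms by (auto simp: power2_eq_square intro!: mult_right_mono mult_left_mono)
  then show "2 * real H * (real H + 1) + 2 * x\<^sup>2 \<le> (real H + 1) * (4 * x)"
    by (simp add: algebra_simps)
qed

lemma uniform_cost_lower_bound_sq:
  assumes F: "feasible n c (\<lambda>j k. D) R"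
  shows "(card (pairs n) * D)\<^sup>2 \<le> 8 * cost n R ^ 2 * c * D"
proof (cases "c = 0 \<or> D = 0")
  case True
  then show ?thesis
    using uniform_cost_lower_bound[OF F, of 0] by auto
next
  case False
  define P where "P = card (pairs n)"
  define x where "x = sqrt (real c / (2 * real D))"
  have x_pos: "0 < x" and c_eq: "real c = 2 * x\<^sup>2 * real D"
    using False by (simp_all add: x_def)
  obtain H :: nat where H: "2 * real H * (real H + 1) + 2 * x\<^sup>2 \<le> (real H + 1) * (4 * x)"
    using nat_balancing_exists[OF x_pos] by blast
  have "real ((H + 1) * (P * D)) \<le> real (cost n R * (2 * H * (H + 1) * D + c))"
    unfolding P_def of_nat_le_iff by (rule uniform_cost_lower_bound[OF F])
  also have "\<dots> = real (cost n R) * ((2 * real H * (real H + 1) + 2 * x\<^sup>2) * real D)"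
    using c_eq by (simp add: algebra_simps)
  also have "\<dots> \<le> real (cost n R) * ((real H + 1) * (4 * x) * real D)"
    using H by (intro mult_left_mono mult_right_mono) auto
  finally have "(real H + 1) * real (P * D) \<le> (real H + 1) * (real (cost n R) * (4 * x * real D))"
    by (simp add: algebra_simps)
  then have "real (P * D) \<le> real (cost n R) * (4 * x * real D)"
    by (simp add: mult_le_cancel_left_pos add_pos_nonneg)
  then have "(real (P * D))\<^sup>2 \<le> (real (cost n R) * (4 * x * real D))\<^sup>2"
    by (intro power_mono) auto
  also have "\<dots> = real (8 * cost n R ^ 2 * c * D)"
    using c_eq by (simp add: power_mult_distrib algebra_simps power2_eq_square)
  finally show ?thesis
    unfolding P_def by (simp only: of_nat_power[symmetric] of_nat_le_iff)
qed

lemma card_le_cost: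
  assumes F: "feasible n c dm R" and n: "2 \<le> n" and pos: "\<forall>(j, k) \<in> pairs n. 1 \<le> dm j k"
  shows "n \<le> cost n R"
proof -
  have "\<exists>i < rings R. v \<in> adms n R i" if v: "v \<in> {1..n}" for v
  proof -
    define k where "k = (if v = 1 then 2 else v)"
    have jk: "(1, k) \<in> pairs n"
      using v n unfolding k_def mem_pairs_iff by auto
    with pos have "(\<Sum>i < rings R. tr0 R i 1 k + tr1 R i 1 k) \<noteq> 0"
      unfolding feasible_demand[OF F jk] by fastforce
    then obtain i where i: "i < rings R" "0 < tr0 R i 1 k + tr1 R i 1 k"
      using sum_eq_0_iff[of "{..<rings R}"] by auto
    with routed_pair_in_adms[OF jk] show ?thesis
      by (cases "v = 1") (auto simp: k_def)
  qed
  then have "{1..n} \<subseteq> (\<Union>i < rings R. adms n R i)"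
    by blast
  then have "n \<le> card (\<Union>i < rings R. adms n R i)"
    using card_mono[of "\<Union>i < rings R. adms n R i" "{1..n}"] by simp
  also have "\<dots> \<le> cost n R"
    unfolding cost_eq_sum_adms by (rule card_UN_le) simp
  finally show ?thesis .
qed

section \<open>Algorithm A with dedicated rings\<close>

lemma sum_lessThan_mult_blocks:
  fixes f :: "nat \<Rightarrow> 'a::comm_monoid_add"
  shows "(\<Sum>i < m * g. f i) = (\<Sum>x < m. \<Sum>q < g. f (x * g + q))"
proof -
  have "(\<Sum>i \<in> {x * g..<x * g + g}. f i) = (\<Sum>q < g. f (x * g + q))" for x
    using sum.shift_bounds_nat_ivl[of f 0 "x * g" g] by (simp add: atLeast0LessThan add.commute)
  then show ?thesis
    by (simp add: sum.nat_group[symmetric])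
qed

lemma sum_min_chunks: "(\<Sum>q<g. min b (d - b * q)) = min d (b * g)" for b d g :: nat
  by (induction g) (auto simp: min_def algebra_simps)

definition chunk :: "nat \<Rightarrow> nat \<Rightarrow> nat \<Rightarrow> nat" where
  "chunk c d q = min (2 * c) (d - 2 * c * q)"

definition dedicated_routing :: "nat \<Rightarrow> nat \<Rightarrow> nat \<Rightarrow> (nat \<times> nat) list \<Rightarrow> routing \<Rightarrow> bool" where
  "dedicated_routing c d g ps R \<longleftrightarrow> rings R = length ps * g \<and>
    (\<forall>i j k. tr0 R i j k =
       (if i < rings R \<and> (j, k) = ps ! (i div g) then chunk c d (i mod g) div 2 else 0)) \<and>
    (\<forall>i j k. tr1 R i j k =
       (if i < rings R \<and> (j, k) = ps ! (i div g)
        then chunk c d (i mod g) - chunk c d (i mod g) div 2 else 0))"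

lemma algA_dedicatedE:
  assumes "algA n c d R" and "1 \<le> real d / (2 * real c)"
  obtains ps where "distinct ps" "set ps = pairs n"
    "dedicated_routing c d (nat \<lceil>real d / (2 * real c)\<rceil>) ps R"
  using assms unfolding algA_def Let_def chunk_def dedicated_routing_def if_P[OF assms(2)] by blast

lemma dedicated_routing_tr:
  assumes "dedicated_routing c d g ps R"
  shows "tr0 R i j k =
      (if i < rings R \<and> (j, k) = ps ! (i div g) then chunk c d (i mod g) div 2 else 0)"
    and "tr1 R i j k = (if i < rings R \<and> (j, k) = ps ! (i div g)
      then chunk c d (i mod g) - chunk c d (i mod g) div 2 else 0)"
  using assms unfolding dedicated_routing_def by blast+

lemma sum_chunk:
  assumes "1 \<le> real d / (2 * real c)"
  shows "(\<Sum>q < nat \<lceil>real d / (2 * real c)\<rceil>. chunk c d q) = d"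
proof -
  define g where "g = nat \<lceil>real d / (2 * real c)\<rceil>"
  have "0 < c"
    using assms by (cases "c = 0") auto
  moreover have "real d / (2 * real c) \<le> real g"
    unfolding g_def by (rule real_nat_ceiling_ge)
  ultimately have "real d \<le> 2 * real c * real g"
    by (simp add: pos_divide_le_eq mult.commute)
  then have "real d \<le> real (2 * c * g)"
    by simp
  then have "d \<le> 2 * c * g"
    by (simp only: of_nat_le_iff)
  then show ?thesis
    unfolding chunk_def sum_min_chunks g_def[symmetric] by simp
qed

lemma dedicated_routing_demand:
  assumes DR: "dedicated_routing c d g ps R" and "distinct ps"
    and x0: "x0 < length ps" "ps ! x0 = (j, k)"
  shows "(\<Sum>i < rings R. tr0 R i j k + tr1 R i j k) = (\<Sum>q < g. chunk c d q)"
proof -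
  have rR: "rings R = length ps * g"
    using DR by (simp add: dedicated_routing_def)
  have "(\<Sum>i < rings R. tr0 R i j k + tr1 R i j k) =
      (\<Sum>x < length ps. \<Sum>q < g. if x = x0 then chunk c d q else 0)"
    unfolding rR sum_lessThan_mult_blocks
  proof (intro sum.cong refl)
    fix x q assume x: "x \<in> {..<length ps}" and q: "q \<in> {..<g}"
    then have i_div: "(x * g + q) div g = x" and i_mod: "(x * g + q) mod g = q"
      by auto
    have "x * g + q < Suc x * g"
      using q by simp
    also have "\<dots> \<le> length ps * g"
      using x by (intro mult_le_mono1) simp
    finally have "x * g + q < rings R"
      unfolding rR .
    moreover have "(j, k) = ps ! x \<longleftrightarrow> x = x0"
      using nth_eq_iff_index_eq[OF \<open>distinct ps\<close>, of x x0] x x0 by auto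
    ultimately show "tr0 R (x * g + q) j k + tr1 R (x * g + q) j k =
        (if x = x0 then chunk c d q else 0)"
      using q by (simp add: dedicated_routing_tr[OF DR] i_div i_mod)
  qed
  also have "\<dots> = (\<Sum>x < length ps. if x = x0 then (\<Sum>q < g. chunk c d q) else 0)"
    by (intro sum.cong) auto
  also have "\<dots> = (\<Sum>q < g. chunk c d q)"
    using x0 by simp
  finally show ?thesis .
qed

lemma dedicated_routing_load_le:
  assumes DR: "dedicated_routing c d g ps R"
  shows "load n R i e \<le> c"
proof -
  have "chunk c d (i mod g) \<le> 2 * c"
    by (simp add: chunk_def)
  then have "chunk c d (i mod g) div 2 \<le> c" "chunk c d (i mod g) - chunk c d (i mod g) div 2 \<le> c"
    by presburger+
  then have "tr0 R i j k \<le> c \<and> tr1 R i j k \<le> c" for j k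
    by (simp add: dedicated_routing_tr[OF DR])
  moreover have "tr0 R i j k = 0 \<and> tr1 R i j k = 0" if "(j, k) \<noteq> ps ! (i div g)" for j k
    using that by (simp add: dedicated_routing_tr[OF DR])
  ultimately have "load n R i e \<le> (\<Sum>p \<in> pairs n. if p = ps ! (i div g) then c else 0)"
    unfolding load_def by (intro sum_mono) (auto split: prod.splits)
  also have "\<dots> \<le> c"
    by (simp add: sum.delta)
  finally show ?thesis .
qed

lemma dedicated_routing_card_adms_le:
  assumes DR: "dedicated_routing c d g ps R"
  shows "card (adms n R i) \<le> 2"
proof -
  obtain j0 k0 where p: "ps ! (i div g) = (j0, k0)"
    by fastforce
  have "adms n R i \<subseteq> {j0, k0}"
  proof
    fix v assume "v \<in> adms n R i"
    then obtain j k where v: "v = j \<or> v = k" and "0 < tr0 R i j k + tr1 R i j k"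
      unfolding adms_def adm_def by auto
    then have "(j, k) = (j0, k0)"
      unfolding dedicated_routing_tr[OF DR] p by (simp split: if_splits)
    with v show "v \<in> {j0, k0}"
      by auto
  qed
  then have "card (adms n R i) \<le> card {j0, k0}"
    by (intro card_mono) auto
  then show ?thesis
    by (cases "j0 = k0") auto
qed

lemma algA_dedicated_feasible:
  assumes A: "algA n c d R" and big: "1 \<le> real d / (2 * real c)"
  shows "feasible n c (\<lambda>j k. d) R"
proof -
  obtain ps where "distinct ps" "set ps = pairs n"
    and DR: "dedicated_routing c d (nat \<lceil>real d / (2 * real c)\<rceil>) ps R"
    using algA_dedicatedE[OF A big] by blast
  have "(\<Sum>i < rings R. tr0 R i j k + tr1 R i j k) = d" if "(j, k) \<in> pairs n" for j k
  proof -
    have "(j, k) \<in> set ps"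
      using that \<open>set ps = pairs n\<close> by simp
    then obtain x0 where "x0 < length ps" "ps ! x0 = (j, k)"
      by (auto simp: in_set_conv_nth)
    with dedicated_routing_demand[OF DR \<open>distinct ps\<close>] sum_chunk[OF big] show ?thesis
      by simp
  qed
  with dedicated_routing_load_le[OF DR] show ?thesis
    unfolding feasible_def by blast
qed

lemma algA_dedicated_cost_le:
  assumes A: "algA n c d R" and big: "1 \<le> real d / (2 * real c)"
  shows "cost n R \<le> 2 * card (pairs n) * nat \<lceil>real d / (2 * real c)\<rceil>"
proof -
  obtain ps where "distinct ps" "set ps = pairs n"
    and DR: "dedicated_routing c d (nat \<lceil>real d / (2 * real c)\<rceil>) ps R"
    using algA_dedicatedE[OF A big] by blast
  then have "cost n R \<le> (\<Sum>i < rings R. 2)"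
    unfolding cost_eq_sum_adms by (intro sum_mono dedicated_routing_card_adms_le)
  also have "\<dots> = 2 * card (pairs n) * nat \<lceil>real d / (2 * real c)\<rceil>"
    using DR distinct_card[OF \<open>distinct ps\<close>] \<open>set ps = pairs n\<close>
    by (simp add: dedicated_routing_def)
  finally show ?thesis .
qed

section \<open>Algorithm A with blocks\<close>

text \<open>The edge \<open>e\<close> lies on a shortest arc between \<open>j\<close> and \<open>k\<close>; these are the edges on which
  \<open>arc_split\<close> may place the odd unit of the pair.\<close>
definition on_short_arc :: "nat \<Rightarrow> nat \<Rightarrow> nat \<Rightarrow> nat \<Rightarrow> bool" where
  "on_short_arc n j k e \<longleftrightarrow> (if j \<le> e \<and> e < k then 2 * (k - j) \<le> n else n \<le> 2 * (k - j))"

lemma arc_split_sum: "arc_split n d j k a0 a1 \<Longrightarrow> a0 + a1 = d"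
  unfolding arc_split_def by (auto split: if_splits)

lemma arc_split_le:
  assumes "arc_split n d j k a0 a1"
  shows "(if j \<le> e \<and> e < k then a0 else a1)
    \<le> d div 2 + (if on_short_arc n j k e then d mod 2 else 0)"
proof -
  have "d - d div 2 = d div 2 + d mod 2"
    by presburger
  with assms show ?thesis
    unfolding arc_split_def on_short_arc_def by (auto split: if_splits)
qed

text \<open>Measured from the edge \<open>e\<close>, the vertex \<open>v\<close> is the \<open>pos v\<close>-th one after it; an edge on a
  shortest arc between \<open>j\<close> and \<open>k\<close> separates them into the two halves of the ring.\<close>
lemma on_short_arc_separates:
  fixes n e j k :: nat
  defines "pos \<equiv> \<lambda>v. if e < v then v - e - 1 else v + n - e - 1"
  assumes "(j, k) \<in> pairs n" and "e \<in> {1..n}" and "on_short_arc n j k e"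
  shows "2 * pos j < n \<longleftrightarrow> \<not> 2 * pos k < n"
  using assms unfolding pos_def on_short_arc_def mem_pairs_iff by (auto split: if_splits)

lemma four_mult_le_add_square: "4 * (a * b) \<le> (a + b)\<^sup>2" for a b :: nat
proof -
  have "int (4 * (a * b)) \<le> int ((a + b)\<^sup>2)"
    using zero_le_power2[of "int a - int b"] by (simp add: power2_eq_square algebra_simps)
  then show ?thesis by linarith
qed

lemma four_card_cut_pairs_le:
  fixes X :: "('a::linorder \<times> 'a) set"
  assumes "finite B" and X: "\<And>j k. (j, k) \<in> X \<Longrightarrow> j < k \<and> j \<in> B \<and> k \<in> B \<and> (j \<in> S \<longleftrightarrow> k \<notin> S)"
  shows "4 * card X \<le> card B ^ 2"
proof -
  define f where "f = (\<lambda>(j, k). if j \<in> S then (j, k) else (k, j))"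
  have "inj_on f X"
  proof (rule inj_onI)
    fix x y assume "x \<in> X" "y \<in> X" and eq: "f x = f y"
    obtain j k j' k' where x: "x = (j, k)" and y: "y = (j', k')"
      by fastforce
    from X[of j k] X[of j' k'] eq \<open>x \<in> X\<close> \<open>y \<in> X\<close> show "x = y"
      unfolding x y f_def by (auto split: if_splits)
  qed
  moreover have "f x \<in> (B \<inter> S) \<times> (B - S)" if "x \<in> X" for x
    using X[of "fst x" "snd x"] that unfolding f_def by (auto simp: case_prod_beta mem_Times_iff)
  then have "f ` X \<subseteq> (B \<inter> S) \<times> (B - S)"
    by blast
  ultimately have "card X \<le> card ((B \<inter> S) \<times> (B - S))"
    using \<open>finite B\<close> by (intro card_inj_on_le) auto
  also have "\<dots> = card (B \<inter> S) * card (B - S)"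
    by (rule card_cartesian_product)
  finally have "4 * card X \<le> 4 * (card (B \<inter> S) * card (B - S))"
    by simp
  also have "\<dots> \<le> (card (B \<inter> S) + card (B - S))\<^sup>2"
    by (rule four_mult_le_add_square)
  also have "card (B \<inter> S) + card (B - S) = card B"
    using card_Int_Diff[OF \<open>finite B\<close>] by simp
  finally show ?thesis .
qed

lemma card_short_arc_pairs_le:
  assumes "finite B" and "e \<in> {1..n}"
  shows "4 * card {(j, k) \<in> pairs n. j \<in> B \<and> k \<in> B \<and> on_short_arc n j k e} \<le> card B ^ 2"
proof (rule four_card_cut_pairs_le[OF \<open>finite B\<close>])
  let ?S = "{v. 2 * (if e < v then v - e - 1 else v + n - e - 1) < n}"
  fix j k assume "(j, k) \<in> {(j, k) \<in> pairs n. j \<in> B \<and> k \<in> B \<and> on_short_arc n j k e}"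
  then show "j < k \<and> j \<in> B \<and> k \<in> B \<and> (j \<in> ?S \<longleftrightarrow> k \<notin> ?S)"
    using on_short_arc_separates[of j k n e] assms(2) by (auto simp: mem_pairs_iff)
qed

lemma card_pairs_within_le:
  assumes "finite B"
  shows "2 * card {(j, k) \<in> pairs n. j \<in> B \<and> k \<in> B} \<le> card B * (card B - 1)"
proof -
  let ?G = "{(j, k) \<in> pairs n. j \<in> B \<and> k \<in> B}"
  have "inj_on (\<lambda>(j, k). {j, k}) ?G"
  proof (rule inj_onI)
    fix x y assume "x \<in> ?G" "y \<in> ?G" and eq: "(\<lambda>(j, k). {j, k}) x = (\<lambda>(j, k). {j, k}) y"
    obtain j k j' k' where x: "x = (j, k)" and y: "y = (j', k')"
      by fastforce
    from \<open>x \<in> ?G\<close> \<open>y \<in> ?G\<close> have "j < k" "j' < k'"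
      unfolding x y mem_pairs_iff by auto
    with eq show "x = y"
      unfolding x y by (auto simp: doubleton_eq_iff)
  qed
  moreover have "(\<lambda>(j, k). {j, k}) ` ?G \<subseteq> {X. X \<subseteq> B \<and> card X = 2}"
    by (auto simp: mem_pairs_iff)
  ultimately have "card ?G \<le> card {X. X \<subseteq> B \<and> card X = 2}"
    using assms by (intro card_inj_on_le) auto
  also have "\<dots> = card B * (card B - 1) div 2"
    using n_subsets[OF assms, of 2] by (simp add: choose_two)
  finally show ?thesis by linarith
qed

lemma block_ring_load_le:
  assumes B: "finite B" and e: "e \<in> {1..n}"
    and tr: "\<And>j k. (j, k) \<in> pairs n \<Longrightarrow>
      (j \<in> B \<and> k \<in> B \<and> arc_split n d j k (tr0 R i j k) (tr1 R i j k))
      \<or> (tr0 R i j k = 0 \<and> tr1 R i j k = 0)"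
  shows "4 * load n R i e \<le> 2 * (card B * (card B - 1)) * (d div 2) + card B ^ 2 * (d mod 2)"
proof -
  define G where "G = {(j, k) \<in> pairs n. j \<in> B \<and> k \<in> B}"
  define S where "S = {(j, k) \<in> pairs n. j \<in> B \<and> k \<in> B \<and> on_short_arc n j k e}"
  have pair: "(if j \<le> e \<and> e < k then tr0 R i j k else tr1 R i j k)
      \<le> (if (j, k) \<in> G then d div 2 else 0) + (if (j, k) \<in> S then d mod 2 else 0)"
    if jk: "(j, k) \<in> pairs n" for j k
    using tr[OF jk] arc_split_le[of n d j k "tr0 R i j k" "tr1 R i j k" e] jk
    unfolding G_def S_def by auto
  have "load n R i e
      \<le> (\<Sum>p \<in> pairs n. (if p \<in> G then d div 2 else 0) + (if p \<in> S then d mod 2 else 0))"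
    unfolding load_def case_prod_unfold by (intro sum_mono) (metis pair prod.collapse)
  also have "\<dots> = card G * (d div 2) + card S * (d mod 2)"
    by (simp add: sum.distrib sum.If_cases Int_absorb1 G_def S_def subset_iff)
  finally have "4 * load n R i e \<le> 2 * (2 * card G) * (d div 2) + (4 * card S) * (d mod 2)"
    by simp
  also have "\<dots> \<le> 2 * (card B * (card B - 1)) * (d div 2) + card B ^ 2 * (d mod 2)"
    using card_pairs_within_le[OF B, of n] card_short_arc_pairs_le[OF B e]
    unfolding G_def S_def by (intro add_mono mult_right_mono mult_left_mono) auto
  finally show ?thesis .
qed

lemma load_le_capacity:
  fixes M d c L :: nat
  assumes L: "4 * L \<le> 2 * (M * (M - 1)) * (d div 2) + M\<^sup>2 * (d mod 2)"
    and M: "M\<^sup>2 * d \<le> 4 * c \<or> (M = 2 \<and> d < 2 * c)"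
  shows "L \<le> c"
  using M
proof
  assume M_le: "M\<^sup>2 * d \<le> 4 * c"
  have "2 * (M * (M - 1)) * (d div 2) \<le> 2 * M\<^sup>2 * (d div 2)"
    by (intro mult_le_mono1 mult_le_mono2) (simp add: power2_eq_square)
  moreover have "M\<^sup>2 * d = M\<^sup>2 * (2 * (d div 2) + d mod 2)"
    by simp
  then have "M\<^sup>2 * d = 2 * M\<^sup>2 * (d div 2) + M\<^sup>2 * (d mod 2)"
    by (simp only: add_mult_distrib2 mult.assoc mult.left_commute)
  ultimately have "4 * L \<le> M\<^sup>2 * d"
    using L by linarith
  with M_le show ?thesis by linarith
next
  assume M2: "M = 2 \<and> d < 2 * c"
  then have "d div 2 + d mod 2 \<le> c"
    by presburger
  moreover have "L \<le> d div 2 + d mod 2"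
    using L M2 by simp
  ultimately show ?thesis
    by (rule le_trans[rotated])
qed

definition block_routing :: "nat \<Rightarrow> nat \<Rightarrow> nat set list \<Rightarrow> routing \<Rightarrow> bool" where
  "block_routing n d bl R \<longleftrightarrow> rings R = length bl \<and>
    (\<forall>i j k. if i < rings R \<and> (j, k) \<in> pairs n \<and> j \<in> bl ! i \<and> k \<in> bl ! i \<and>
                 \<not> (\<exists>i' < i. j \<in> bl ! i' \<and> k \<in> bl ! i')
              then arc_split n d j k (tr0 R i j k) (tr1 R i j k)
              else tr0 R i j k = 0 \<and> tr1 R i j k = 0)"

lemma block_routing_demand:
  assumes BR: "block_routing n d bl R" and jk: "(j, k) \<in> pairs n" and "\<exists>X \<in> set bl. j \<in> X \<and> k \<in> X"
  shows "(\<Sum>i < rings R. tr0 R i j k + tr1 R i j k) = d"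
proof -
  obtain i1 where i1: "i1 < length bl" "j \<in> bl ! i1" "k \<in> bl ! i1"
    using assms(3) by (auto simp: in_set_conv_nth)
  then obtain i0 where i0: "j \<in> bl ! i0" "k \<in> bl ! i0"
    and least: "\<forall>i < i0. \<not> (j \<in> bl ! i \<and> k \<in> bl ! i)"
    using exists_least_iff[of "\<lambda>i. j \<in> bl ! i \<and> k \<in> bl ! i"] by blast
  with i1 have "i0 < rings R"
    using BR unfolding block_routing_def by (metis le_less_trans not_le)
  have routed: "i < rings R \<and> (j, k) \<in> pairs n \<and> j \<in> bl ! i \<and> k \<in> bl ! i \<and>
      \<not> (\<exists>i' < i. j \<in> bl ! i' \<and> k \<in> bl ! i') \<longleftrightarrow> i = i0" if "i < rings R" for i
    using that jk i0 least \<open>i0 < rings R\<close> by (metis linorder_neqE_nat)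
  have "(\<Sum>i < rings R. tr0 R i j k + tr1 R i j k) = (\<Sum>i < rings R. if i = i0 then d else 0)"
  proof (rule sum.cong)
    fix i assume "i \<in> {..<rings R}"
    then have i: "i < rings R"
      by simp
    have "if i < rings R \<and> (j, k) \<in> pairs n \<and> j \<in> bl ! i \<and> k \<in> bl ! i \<and>
        \<not> (\<exists>i' < i. j \<in> bl ! i' \<and> k \<in> bl ! i')
      then arc_split n d j k (tr0 R i j k) (tr1 R i j k) else tr0 R i j k = 0 \<and> tr1 R i j k = 0"
      using BR unfolding block_routing_def by blast
    then show "tr0 R i j k + tr1 R i j k = (if i = i0 then d else 0)"
      unfolding routed[OF i] by (auto dest: arc_split_sum)
  qed simp
  also have "\<dots> = d"
    using \<open>i0 < rings R\<close> by simp
  finally show ?thesis .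
qed

lemma block_routing_routed_in_block:
  assumes "block_routing n d bl R" and "0 < tr0 R i j k + tr1 R i j k"
  shows "j \<in> bl ! i \<and> k \<in> bl ! i"
  using assms unfolding block_routing_def by (metis (no_types, lifting) add_0 less_irrefl)

lemma block_routing_feasible:
  assumes BR: "block_routing n d bl R"
    and blocks: "\<forall>X \<in> set bl. finite X \<and> card X = M"
    and cover: "\<forall>(j, k) \<in> pairs n. \<exists>X \<in> set bl. j \<in> X \<and> k \<in> X"
    and cap: "M\<^sup>2 * d \<le> 4 * c \<or> (M = 2 \<and> d < 2 * c)"
  shows "feasible n c (\<lambda>j k. d) R"
proof -
  have "load n R i e \<le> c" if i: "i < rings R" and e: "e \<in> {1..n}" for i e
  proof -
    have B: "finite (bl ! i)" "card (bl ! i) = M"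
      using blocks i BR by (auto simp: block_routing_def)
    have "(j \<in> bl ! i \<and> k \<in> bl ! i \<and> arc_split n d j k (tr0 R i j k) (tr1 R i j k))
        \<or> (tr0 R i j k = 0 \<and> tr1 R i j k = 0)" if "(j, k) \<in> pairs n" for j k
      using BR that unfolding block_routing_def by (metis (no_types, lifting))
    from block_ring_load_le[OF B(1) e this] show ?thesis
      unfolding B(2) using cap by (rule load_le_capacity)
  qed
  moreover have "(\<Sum>i < rings R. tr0 R i j k + tr1 R i j k) = d" if "(j, k) \<in> pairs n" for j k
    using block_routing_demand[OF BR that] cover that by blast
  ultimately show ?thesis
    unfolding feasible_def by blast
qed

lemma block_routing_cost_le:
  assumes BR: "block_routing n d bl R" and blocks: "\<forall>X \<in> set bl. finite X \<and> card X \<le> M"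
  shows "cost n R \<le> length bl * M"
proof -
  have "card (adms n R i) \<le> M" if i: "i < rings R" for i
  proof -
    have "adms n R i \<subseteq> bl ! i"
    proof
      fix v assume "v \<in> adms n R i"
      then obtain j k where jk: "(j, k) \<in> pairs n" "v = j \<or> v = k" "0 < tr0 R i j k + tr1 R i j k"
        unfolding adms_def adm_def by auto
      with block_routing_routed_in_block[OF BR jk(3)] show "v \<in> bl ! i"
        by auto
    qed
    moreover have "finite (bl ! i)" "card (bl ! i) \<le> M"
      using blocks i BR by (auto simp: block_routing_def)
    ultimately show ?thesis
      by (meson card_mono le_trans)
  qed
  then have "cost n R \<le> (\<Sum>i < rings R. M)"
    unfolding cost_eq_sum_adms by (intro sum_mono) auto
  also have "\<dots> = length bl * M"
    using BR by (simp add: block_routing_def)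
  finally show ?thesis .
qed

lemma pair_in_union_block:
  assumes "\<Union>F = V" and "2 \<le> card F"
    and E: "\<And>A B. A \<in> F \<Longrightarrow> B \<in> F \<Longrightarrow> A \<noteq> B \<Longrightarrow> A \<union> B \<subseteq> E {A, B}"
    and "j \<in> V" "k \<in> V"
  shows "\<exists>X \<in> {E {A, B} | A B. A \<in> F \<and> B \<in> F \<and> A \<noteq> B}. j \<in> X \<and> k \<in> X"
proof -
  obtain A B where AB: "A \<in> F" "B \<in> F" "j \<in> A" "k \<in> B"
    using assms(1,4,5) by blast
  show ?thesis
  proof (cases "A = B")
    case True
    have "\<not> F \<subseteq> {A}"
    proof
      assume "F \<subseteq> {A}"
      then have "card F \<le> card {A}"
        by (intro card_mono) auto
      with \<open>2 \<le> card F\<close> show False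
        by simp
    qed
    then obtain C where "C \<in> F" "C \<noteq> A"
      by blast
    with AB True E[of A C] show ?thesis by blast
  next
    case False
    with AB E[of A B] show ?thesis by blast
  qed
qed

lemma card_union_blocks_le:
  assumes "finite F"
  shows "card {E {A, B} | A B. A \<in> F \<and> B \<in> F \<and> A \<noteq> B} \<le> card F choose 2"
proof -
  have "{E {A, B} | A B. A \<in> F \<and> B \<in> F \<and> A \<noteq> B} = E ` {X. X \<subseteq> F \<and> card X = 2}"
    by (auto simp: card_2_iff)
  also have "card \<dots> \<le> card {X. X \<subseteq> F \<and> card X = 2}"
    using assms by (intro card_image_le) simp
  also have "\<dots> = card F choose 2"
    using n_subsets[OF assms] .
  finally show ?thesis .
qed

lemma algM_bounds: "2 \<le> n \<Longrightarrow> 2 \<le> algM n f \<and> algM n f \<le> n"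
  by (auto simp: algM_def Let_def not_less intro: le_nat_floor)

lemma algM_eq:
  assumes "0 < c" and "0 < d"
  shows "algM n (real d / (2 * real c)) = (let s = \<lfloor>sqrt (4 * real c / real d)\<rfloor> in
     if s < 2 then 2 else if s > int n then n else nat s)"
proof -
  have "2 / (real d / (2 * real c)) = 4 * real c / real d"
    using assms by (simp add: field_simps)
  then show ?thesis
    unfolding algM_def by simp
qed

lemma algM_capacity:
  fixes n c d :: nat
  assumes "0 < c" and "0 < d" and small: "real d / (2 * real c) < 1"
  defines "M \<equiv> algM n (real d / (2 * real c))"
  shows "M\<^sup>2 * d \<le> 4 * c \<or> (M = 2 \<and> d < 2 * c)"
proof -
  define s where "s = \<lfloor>sqrt (4 * real c / real d)\<rfloor>"
  have M: "M = (if s < 2 then 2 else if s > int n then n else nat s)"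
    unfolding M_def algM_eq[OF assms(1,2)] s_def Let_def ..
  show ?thesis
  proof (cases "s < 2")
    case True
    have "real d < 2 * real c"
      using small \<open>0 < c\<close> by (simp add: field_simps)
    with True show ?thesis
      unfolding M by simp
  next
    case False
    then have "real M \<le> real_of_int s"
      unfolding M by auto
    also have "\<dots> \<le> sqrt (4 * real c / real d)"
      unfolding s_def by simp
    finally have "(real M)\<^sup>2 \<le> 4 * real c / real d"
      using sqrt_ge_absD[of "real M"] by simp
    then have "real (M\<^sup>2 * d) \<le> real (4 * c)"
      using \<open>0 < d\<close> by (simp add: field_simps)
    then have "M\<^sup>2 * d \<le> 4 * c"
      by (simp only: of_nat_le_iff)
    then show ?thesis ..
  qed
qed

lemma algM_cases:
  fixes n c d :: nat
  assumes "0 < c" and "0 < d"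
  defines "M \<equiv> algM n (real d / (2 * real c))"
  shows "(M = 2 \<and> c < d) \<or> M = n \<or> 4 * c < (M + 1)\<^sup>2 * d"
proof -
  define x where "x = sqrt (4 * real c / real d)"
  define s where "s = \<lfloor>x\<rfloor>"
  have M: "M = (if s < 2 then 2 else if s > int n then n else nat s)"
    unfolding M_def algM_eq[OF assms(1,2)] s_def x_def Let_def ..
  have sq: "4 * real c / real d < y\<^sup>2" if "x < y" for y
    using that real_le_rsqrt[of y] unfolding x_def by (meson not_le)
  consider "s < 2" | "2 \<le> s" "s > int n" | "2 \<le> s" "s \<le> int n"
    by linarith
  then show ?thesis
  proof cases
    case 1
    then have "4 * real c / real d < 2\<^sup>2"
      by (intro sq) (simp add: s_def floor_less_iff)
    with \<open>0 < d\<close> 1 show ?thesis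
      unfolding M by (simp add: divide_less_eq)
  next
    case 2
    then show ?thesis
      unfolding M by simp
  next
    case 3
    then have "real M = real_of_int s"
      unfolding M by simp
    then have "4 * real c / real d < (real M + 1)\<^sup>2"
      by (intro sq) (simp add: s_def)
    then have "real (4 * c) < real ((M + 1)\<^sup>2 * d)"
      using \<open>0 < d\<close> by (simp add: divide_less_eq add.commute)
    then have "4 * c < (M + 1)\<^sup>2 * d"
      by (simp only: of_nat_less_iff)
    then show ?thesis
      by simp
  qed
qed

lemma two_le_block_count:
  assumes "2 \<le> M" and "M \<le> n"
  shows "2 \<le> nat \<lceil>real n / real (M div 2)\<rceil>"
proof -
  have "1 \<le> M div 2" "2 * (M div 2) \<le> n"
    using assms by auto
  then have "2 \<le> real n / real (M div 2)"
    by (simp add: field_simps)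
  then show ?thesis
    by linarith
qed

lemma algA_blocksE:
  fixes n c d :: nat
  assumes A: "algA n c d R" and small: "real d / (2 * real c) < 1" and n: "2 \<le> n"
    and M: "M = algM n (real d / (2 * real c))"
  obtains bl where "block_routing n d bl R" "\<forall>X \<in> set bl. X \<subseteq> {1..n} \<and> card X = M"
    "\<forall>(j, k) \<in> pairs n. \<exists>X \<in> set bl. j \<in> X \<and> k \<in> X"
    "length bl \<le> nat \<lceil>real n / real (M div 2)\<rceil> choose 2"
proof -
  have "\<exists>F E bl. finite F \<and> card F = nat \<lceil>real n / real (M div 2)\<rceil> \<and>
      (\<forall>A \<in> F. A \<subseteq> {1..n} \<and> card A = M div 2) \<and> \<Union>F = {1..n} \<and>
      (\<forall>A \<in> F. \<forall>B \<in> F. A \<noteq> B \<longrightarrow> A \<union> B \<subseteq> E {A, B} \<and> E {A, B} \<subseteq> {1..n} \<and> card (E {A, B}) = M) \<and>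
      distinct bl \<and>
      set bl = (if card F = 1 then {{1..n}} else {E {A, B} | A B. A \<in> F \<and> B \<in> F \<and> A \<noteq> B}) \<and>
      block_routing n d bl R"
    using A small unfolding algA_def Let_def block_routing_def M by simp
  then obtain F E bl where finF: "finite F" and cardF: "card F = nat \<lceil>real n / real (M div 2)\<rceil>"
    and "\<forall>A \<in> F. A \<subseteq> {1..n} \<and> card A = M div 2" and covF: "\<Union>F = {1..n}"
    and E: "\<forall>A \<in> F. \<forall>B \<in> F. A \<noteq> B \<longrightarrow> A \<union> B \<subseteq> E {A, B} \<and> E {A, B} \<subseteq> {1..n} \<and> card (E {A, B}) = M"
    and dbl: "distinct bl"
    and set_bl: "set bl = (if card F = 1 then {{1..n}} else {E {A, B} | A B. A \<in> F \<and> B \<in> F \<and> A \<noteq> B})"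
    and BR: "block_routing n d bl R"
    by (elim exE conjE) iprover
  have card_F: "2 \<le> card F"
    using algM_bounds[OF n] two_le_block_count unfolding cardF M by blast
  then have set_bl': "set bl = {E {A, B} | A B. A \<in> F \<and> B \<in> F \<and> A \<noteq> B}"
    using set_bl by simp
  show thesis
  proof
    show "block_routing n d bl R" by (rule BR)
    show "\<forall>X \<in> set bl. X \<subseteq> {1..n} \<and> card X = M"
      using E unfolding set_bl' by blast
    show "\<forall>(j, k) \<in> pairs n. \<exists>X \<in> set bl. j \<in> X \<and> k \<in> X"
    proof clarify
      fix j k assume "(j, k) \<in> pairs n"
      with E show "\<exists>X \<in> set bl. j \<in> X \<and> k \<in> X"
        unfolding set_bl' by (intro pair_in_union_block[OF covF card_F]) (auto simp: mem_pairs_iff)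
    qed
    have "length bl = card (set bl)"
      using distinct_card[OF dbl] by simp
    also have "\<dots> \<le> card F choose 2"
      unfolding set_bl' by (rule card_union_blocks_le[OF finF])
    finally show "length bl \<le> nat \<lceil>real n / real (M div 2)\<rceil> choose 2"
      unfolding cardF .
  qed
qed

lemma algA_blocks_feasible:
  assumes A: "algA n c d R" and small: "real d / (2 * real c) < 1"
    and "0 < c" and "0 < d" and n: "2 \<le> n"
  shows "feasible n c (\<lambda>j k. d) R"
proof -
  define M where "M = algM n (real d / (2 * real c))"
  obtain bl where BR: "block_routing n d bl R" and blocks: "\<forall>X \<in> set bl. X \<subseteq> {1..n} \<and> card X = M"
    and cover: "\<forall>(j, k) \<in> pairs n. \<exists>X \<in> set bl. j \<in> X \<and> k \<in> X"
    by (rule algA_blocksE[OF A small n M_def]) iprover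
  have "\<forall>X \<in> set bl. finite X \<and> card X = M"
    using blocks finite_subset by blast
  with BR cover algM_capacity[OF \<open>0 < c\<close> \<open>0 < d\<close> small] show ?thesis
    unfolding M_def by (intro block_routing_feasible) auto
qed

lemma algA_blocks_cost_le:
  assumes A: "algA n c d R" and small: "real d / (2 * real c) < 1" and n: "2 \<le> n"
  defines "M \<equiv> algM n (real d / (2 * real c))"
  shows "cost n R \<le> (nat \<lceil>real n / real (M div 2)\<rceil> choose 2) * M"
proof -
  obtain bl where BR: "block_routing n d bl R" and blocks: "\<forall>X \<in> set bl. X \<subseteq> {1..n} \<and> card X = M"
    and len: "length bl \<le> nat \<lceil>real n / real (M div 2)\<rceil> choose 2"
    by (rule algA_blocksE[OF A small n M_def[THEN meta_eq_to_obj_eq]]) iprover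
  have "\<forall>X \<in> set bl. finite X \<and> card X \<le> M"
    using blocks finite_subset by fastforce
  then have "cost n R \<le> length bl * M"
    by (rule block_routing_cost_le[OF BR])
  also have "\<dots> \<le> (nat \<lceil>real n / real (M div 2)\<rceil> choose 2) * M"
    using len by (rule mult_le_mono1)
  finally show ?thesis .
qed

section \<open>The approximation ratio\<close>

lemma nat_ceiling_divide_bounds:
  assumes "0 < \<mu>"
  shows "nat \<lceil>real n / real \<mu>\<rceil> * \<mu> \<le> n + \<mu> - 1" "(nat \<lceil>real n / real \<mu>\<rceil> - 1) * \<mu> \<le> n - 1"
proof -
  define p where "p = nat \<lceil>real n / real \<mu>\<rceil>"
  have "real p < real n / real \<mu> + 1"
    unfolding p_def by (rule real_nat_ceiling_less) simp
  then have "real (p * \<mu>) < real (n + \<mu>)"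
    using assms by (simp add: field_simps)
  then have "p * \<mu> < n + \<mu>"
    by (simp only: of_nat_less_iff)
  then show "p * \<mu> \<le> n + \<mu> - 1" "(p - 1) * \<mu> \<le> n - 1"
    by (auto simp: diff_mult_distrib)
qed

lemma mult_Suc_le_half_sq:
  fixes s :: nat
  assumes "2 \<le> s div 2"
  shows "s * (s + 1) \<le> 8 * (s div 2 * (s div 2))"
proof -
  define \<mu> where "\<mu> = s div 2"
  have "s \<le> 2 * \<mu> + 1" "2 \<le> \<mu>"
    using assms unfolding \<mu>_def by auto
  then have "2 * \<mu> \<le> \<mu> * \<mu>"
    by (intro mult_le_mono1)
  have "s * (s + 1) \<le> (2 * \<mu> + 1) * (2 * \<mu> + 2)"
    using \<open>s \<le> 2 * \<mu> + 1\<close> by (intro mult_le_mono) auto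
  also have "\<dots> = 4 * (\<mu> * \<mu>) + 6 * \<mu> + 2"
    by (simp add: algebra_simps)
  also have "\<dots> \<le> 8 * (\<mu> * \<mu>)"
    using \<open>2 * \<mu> \<le> \<mu> * \<mu>\<close> \<open>2 \<le> \<mu>\<close> by linarith
  finally show ?thesis
    unfolding \<mu>_def .
qed

lemma block_count_le:
  fixes s n :: nat
  assumes "2 \<le> s" and "s \<le> n"
  defines "p \<equiv> nat \<lceil>real n / real (s div 2)\<rceil>"
  shows "p * (p - 1) * (s * (s + 1)) \<le> 12 * (n * (n - 1))"
proof -
  define \<mu> where "\<mu> = s div 2"
  have "0 < \<mu>" "2 * \<mu> \<le> n"
    using assms(1,2) unfolding \<mu>_def by auto
  note bounds = nat_ceiling_divide_bounds[OF \<open>0 < \<mu>\<close>[unfolded \<mu>_def], of n, folded p_def \<mu>_def]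
  show ?thesis
  proof (cases "\<mu> = 1")
    case True
    then have "s * (s + 1) \<le> 3 * 4"
      using \<open>2 \<le> s\<close> unfolding \<mu>_def by (intro mult_le_mono) auto
    moreover have "p * (p - 1) \<le> n * (n - 1)"
      using bounds True by (intro mult_le_mono) auto
    ultimately have "p * (p - 1) * (s * (s + 1)) \<le> n * (n - 1) * (3 * 4)"
      by (rule mult_le_mono[rotated])
    then show ?thesis
      by simp
  next
    case False
    with \<open>0 < \<mu>\<close> have "s * (s + 1) \<le> 8 * (\<mu> * \<mu>)"
      unfolding \<mu>_def by (intro mult_Suc_le_half_sq) simp
    then have "p * (p - 1) * (s * (s + 1)) \<le> p * (p - 1) * (8 * (\<mu> * \<mu>))"
      by simp
    also have "\<dots> = 8 * ((p * \<mu>) * ((p - 1) * \<mu>))"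
      by (simp add: algebra_simps)
    also have "\<dots> \<le> 8 * ((n + \<mu> - 1) * (n - 1))"
      using bounds by (intro mult_le_mono) auto
    also have "\<dots> \<le> 12 * (n * (n - 1))"
    proof -
      have "8 * (n + \<mu> - 1) \<le> 12 * n"
        using \<open>2 * \<mu> \<le> n\<close> by linarith
      then show ?thesis
        using mult_le_mono1[of "8 * (n + \<mu> - 1)" "12 * n" "n - 1"] by (simp add: mult.assoc)
    qed
    finally show ?thesis .
  qed
qed

lemma block_cost_mult_le:
  assumes cst: "cst \<le> (nat \<lceil>real n / real (M div 2)\<rceil> choose 2) * M" and "2 \<le> M" and "M \<le> n"
  shows "cst * (M + 1) \<le> 12 * card (pairs n)"
proof -
  define p where "p = nat \<lceil>real n / real (M div 2)\<rceil>"
  have "2 * (cst * (M + 1)) \<le> 2 * (p choose 2) * (M * (M + 1))"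
    using mult_le_mono1[OF cst, of "M + 1"] unfolding p_def by (simp add: algebra_simps)
  also have "\<dots> \<le> p * (p - 1) * (M * (M + 1))"
    by (intro mult_le_mono1) (simp add: choose_two)
  also have "\<dots> \<le> 12 * (n * (n - 1))"
    unfolding p_def using \<open>2 \<le> M\<close> \<open>M \<le> n\<close> by (rule block_count_le)
  also have "\<dots> = 2 * (12 * card (pairs n))"
    using card_pairs[of n] by simp
  finally show ?thesis
    by simp
qed

lemma half_block_count_choose_le:
  assumes "2 \<le> n"
  shows "nat \<lceil>real n / real (n div 2)\<rceil> choose 2 \<le> 3"
proof -
  define p where "p = nat \<lceil>real n / real (n div 2)\<rceil>"
  have "n \<le> 3 * (n div 2)"
    using assms by presburger
  then have "real n \<le> real (3 * (n div 2))"
    by (simp only: of_nat_le_iff)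
  then have "real n / real (n div 2) \<le> 3"
    using assms by (simp add: divide_le_eq)
  then have "p \<le> 3"
    unfolding p_def by simp
  then have "p * (p - 1) \<le> 3 * 2"
    by (intro mult_le_mono) auto
  then show ?thesis
    unfolding p_def[symmetric] by (simp add: choose_two)
qed

lemma pairs_sq_le:
  fixes K :: real and P m D c d M :: nat
  assumes sq: "(P * D)\<^sup>2 \<le> 8 * m\<^sup>2 * c * D" and M: "4 * c < (M + 1)\<^sup>2 * d"
    and dK: "real d \<le> K * real D" and D: "1 \<le> D"
  shows "(real P)\<^sup>2 \<le> 2 * K * (real m)\<^sup>2 * (real M + 1)\<^sup>2"
proof -
  have D_pos: "0 < real D"
    using D by simp
  have "(real P)\<^sup>2 * real D \<le> 2 * (real m)\<^sup>2 * (4 * real c)"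
  proof -
    have "real ((P * D)\<^sup>2) \<le> real (8 * m\<^sup>2 * c * D)"
      using sq by (simp only: of_nat_le_iff)
    then have "(real P)\<^sup>2 * real D * real D \<le> 8 * (real m)\<^sup>2 * real c * real D"
      by (simp add: power_mult_distrib power2_eq_square mult_ac)
    with D_pos show ?thesis
      by simp
  qed
  also have "\<dots> \<le> 2 * (real m)\<^sup>2 * ((real M + 1)\<^sup>2 * (K * real D))"
  proof (intro mult_left_mono)
    have "real (4 * c) < real ((M + 1)\<^sup>2 * d)"
      using M by (simp only: of_nat_less_iff)
    then have "4 * real c < (real M + 1)\<^sup>2 * real d"
      by (simp add: add.commute)
    also have "\<dots> \<le> (real M + 1)\<^sup>2 * (K * real D)"
      using dK by (intro mult_left_mono) auto
    finally show "4 * real c \<le> (real M + 1)\<^sup>2 * (K * real D)"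
      by simp
  qed simp
  finally show ?thesis
    using D_pos by (simp add: mult_ac)
qed

lemma sqrt_cost_ratio:
  fixes K :: real and cst P m M :: nat
  assumes cst: "cst * (M + 1) \<le> 12 * P" and P_sq: "(real P)\<^sup>2 \<le> 2 * K * (real m)\<^sup>2 * (real M + 1)\<^sup>2"
    and K: "0 \<le> K"
  shows "real cst \<le> 12 * sqrt (2 * K) * real m"
proof -
  have "real (cst * (M + 1)) \<le> real (12 * P)"
    using cst by (simp only: of_nat_le_iff)
  then have "real cst * (real M + 1) \<le> 12 * real P"
    by (simp add: algebra_simps)
  then have "(real cst * (real M + 1))\<^sup>2 \<le> (12 * real P)\<^sup>2"
    by (intro power_mono) simp_all
  also have "\<dots> = 144 * (real P)\<^sup>2"
    by (simp add: power_mult_distrib)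
  also have "\<dots> \<le> 144 * (2 * K * (real m)\<^sup>2 * (real M + 1)\<^sup>2)"
    using P_sq by simp
  finally have "(real cst)\<^sup>2 * (real M + 1)\<^sup>2 \<le> (288 * K * (real m)\<^sup>2) * (real M + 1)\<^sup>2"
    by (simp only: power_mult_distrib)
  then have "(real cst)\<^sup>2 \<le> 288 * K * (real m)\<^sup>2"
    by (simp add: mult_le_cancel_right)
  also have "\<dots> = (12 * sqrt (2 * K) * real m)\<^sup>2"
    using K by (simp add: power_mult_distrib)
  finally show ?thesis
    by (rule power2_le_imp_le) (use K in simp)
qed

lemma algA_dedicated_cost_ratio:
  fixes K :: real
  assumes A: "algA n c d R" and big: "1 \<le> real d / (2 * real c)"
    and lin: "real (card (pairs n)) * real d \<le> K * real m * real c"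
  shows "real (cost n R) \<le> 2 * K * real m"
proof -
  define g where "g = nat \<lceil>real d / (2 * real c)\<rceil>"
  have c: "0 < real c"
    using big by (cases "c = 0") auto
  have "real g < real d / (2 * real c) + 1"
    unfolding g_def by (rule real_nat_ceiling_less) simp
  also have "\<dots> \<le> real d / real c"
    using big c by (simp add: field_simps)
  finally have g: "real g * real c \<le> real d"
    using c by (simp add: field_simps)
  have "real (cost n R) \<le> real (2 * card (pairs n) * g)"
    using algA_dedicated_cost_le[OF A big] unfolding g_def by (simp only: of_nat_le_iff)
  then have "real (cost n R) * real c \<le> 2 * real (card (pairs n)) * (real g * real c)"
    using c by (simp add: mult_right_mono mult_ac)
  also have "\<dots> \<le> 2 * (real (card (pairs n)) * real d)"
    using g by (simp add: mult_left_mono)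
  also have "\<dots> \<le> (2 * K * real m) * real c"
    using lin by simp
  finally show ?thesis
    using c by simp
qed

lemma algA_blocks_cost_ratio:
  fixes K :: real
  assumes A: "algA n c d R" and small: "real d / (2 * real c) < 1"
    and "0 < c" and "0 < d" and n: "2 \<le> n" and K: "1 \<le> K"
    and D: "1 \<le> D" and dK: "real d \<le> K * real D"
    and lin: "real (card (pairs n)) * real d \<le> K * real m * real c"
    and m_n: "n \<le> m" and m_sq: "(card (pairs n) * D)\<^sup>2 \<le> 8 * m\<^sup>2 * c * D"
  shows "real (cost n R) \<le> 2 * K * real m \<or> real (cost n R) \<le> 12 * sqrt (2 * K) * real m"
proof -
  define M where "M = algM n (real d / (2 * real c))"
  have cost: "cost n R \<le> (nat \<lceil>real n / real (M div 2)\<rceil> choose 2) * M"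
    using algA_blocks_cost_le[OF A small n] unfolding M_def .
  consider "M = 2" "c < d" | "M = n" | "4 * c < (M + 1)\<^sup>2 * d"
    using algM_cases[OF \<open>0 < c\<close> \<open>0 < d\<close>, of n] unfolding M_def by blast
  then show ?thesis
  proof cases
    case 1
    have "real (card (pairs n)) * real d \<le> K * real m * real c"
      by (rule lin)
    also have "\<dots> \<le> K * real m * real d"
      using \<open>c < d\<close> K by (intro mult_left_mono) auto
    finally have "real (card (pairs n)) \<le> K * real m"
      using \<open>0 < d\<close> by (simp add: mult_le_cancel_right_pos)
    moreover have "cost n R \<le> 2 * card (pairs n)"
      using cost card_pairs[of n] 1 by (simp add: choose_two)
    ultimately show ?thesis
      by (simp flip: of_nat_le_iff)
  next
    case 2
    with cost half_block_count_choose_le[OF n] m_n have "cost n R \<le> 3 * m"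
      by (metis le_trans mult_le_mono)
    then have "real (cost n R) \<le> 3 * real m"
      by (simp flip: of_nat_le_iff)
    also have "\<dots> \<le> 12 * sqrt (2 * K) * real m"
    proof (rule mult_right_mono)
      have "1 \<le> sqrt (2 * K)"
        using K by (intro real_sqrt_ge_one) simp
      then show "3 \<le> 12 * sqrt (2 * K)"
        by linarith
    qed simp
    finally show ?thesis ..
  next
    case 3
    have "2 \<le> M" "M \<le> n"
      using algM_bounds[OF n] unfolding M_def by auto
    with cost have "cost n R * (M + 1) \<le> 12 * card (pairs n)"
      by (rule block_cost_mult_le)
    moreover have "(real (card (pairs n)))\<^sup>2 \<le> 2 * K * (real m)\<^sup>2 * (real M + 1)\<^sup>2"
      using m_sq 3 dK D by (rule pairs_sq_le)
    ultimately show ?thesis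
      using K by (intro disjI2 sqrt_cost_ratio) auto
  qed
qed

lemma algA_feasible:
  assumes "algA n c d R" and "0 < c" and "0 < d" and "2 \<le> n"
  shows "feasible n c (\<lambda>j k. d) R"
proof (cases "1 \<le> real d / (2 * real c)")
  case True
  with assms(1) show ?thesis by (rule algA_dedicated_feasible)
next
  case False
  with assms show ?thesis by (intro algA_blocks_feasible) auto
qed

lemma algA_cost_le:
  fixes K :: real
  assumes A: "algA n c d R" and "0 < c" and "0 < d" and n: "2 \<le> n" and K: "1 \<le> K"
    and D: "1 \<le> D" and dK: "real d \<le> K * real D"
    and m_n: "n \<le> m" and m_lin: "card (pairs n) * D \<le> m * c"
    and m_sq: "(card (pairs n) * D)\<^sup>2 \<le> 8 * m\<^sup>2 * c * D"
  shows "real (cost n R) \<le> max (2 * K) (12 * sqrt (2 * K)) * real m"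
proof -
  have "real (card (pairs n)) * real d \<le> real (card (pairs n)) * (K * real D)"
    using dK by (intro mult_left_mono) auto
  also have "\<dots> = K * real (card (pairs n) * D)"
    by simp
  also have "\<dots> \<le> K * real (m * c)"
    using K m_lin by (intro mult_left_mono) (simp_all only: of_nat_le_iff)
  finally have lin: "real (card (pairs n)) * real d \<le> K * real m * real c"
    by (simp add: mult_ac)
  have "real (cost n R) \<le> 2 * K * real m \<or> real (cost n R) \<le> 12 * sqrt (2 * K) * real m"
  proof (cases "1 \<le> real d / (2 * real c)")
    case True
    with A lin show ?thesis
      by (intro disjI1 algA_dedicated_cost_ratio)
  next
    case False
    with assms lin show ?thesis
      by (intro algA_blocks_cost_ratio) auto
  qed
  moreover have "2 * K * real m \<le> max (2 * K) (12 * sqrt (2 * K)) * real m"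
    and "12 * sqrt (2 * K) * real m \<le> max (2 * K) (12 * sqrt (2 * K)) * real m"
    by (intro mult_right_mono; simp)+
  ultimately show ?thesis
    by linarith
qed

lemma Max_dem_bounds:
  assumes "2 \<le> n" and d: "d = Max {dem L j k | j k. j \<in> {1..n} \<and> k \<in> {1..n} \<and> j \<noteq> k}"
  shows "\<forall>(j, k) \<in> pairs n. dem L j k \<le> d"
    and "\<exists>j k. j \<in> {1..n} \<and> k \<in> {1..n} \<and> j \<noteq> k \<and> dem L j k = d"
proof -
  define S where "S = {dem L j k | j k. j \<in> {1..n} \<and> k \<in> {1..n} \<and> j \<noteq> k}"
  have "S \<subseteq> (\<lambda>(j, k). dem L j k) ` ({1..n} \<times> {1..n})"
    unfolding S_def by auto
  then have "finite S"
    by (rule finite_subset) simp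
  moreover have "dem L 1 2 \<in> S"
    unfolding S_def using assms(1) by force
  ultimately have "d \<in> S" and le: "\<And>x. x \<in> S \<Longrightarrow> x \<le> d"
    unfolding d S_def[symmetric] using Max_in Max_ge by blast+
  then show "\<exists>j k. j \<in> {1..n} \<and> k \<in> {1..n} \<and> j \<noteq> k \<and> dem L j k = d"
    unfolding S_def by auto
  show "\<forall>(j, k) \<in> pairs n. dem L j k \<le> d"
  proof clarify
    fix j k assume "(j, k) \<in> pairs n"
    then have "dem L j k \<in> S"
      unfolding S_def mem_pairs_iff by force
    then show "dem L j k \<le> d"
      by (rule le)
  qed
qed

lemma quasi_uniform_lower_demand:
  assumes qu: "quasi_uniform n K L" and K: "0 < K"
    and jk0: "j0 \<in> {1..n}" "k0 \<in> {1..n}" "j0 \<noteq> k0"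
  obtains D where "1 \<le> D" "real (dem L j0 k0) \<le> K * real D" "\<forall>(j, k) \<in> pairs n. D \<le> dem L j k"
proof
  have pos: "1 \<le> dem L j k" if "j \<in> {1..n}" "k \<in> {1..n}" "j \<noteq> k" for j k
    using qu that unfolding quasi_uniform_def by blast
  show "1 \<le> nat \<lceil>real (dem L j0 k0) / K\<rceil>"
    using pos[OF jk0] K by (simp add: Suc_le_eq)
  have "real (dem L j0 k0) / K \<le> real (nat \<lceil>real (dem L j0 k0) / K\<rceil>)"
    by (rule real_nat_ceiling_ge)
  then show "real (dem L j0 k0) \<le> K * real (nat \<lceil>real (dem L j0 k0) / K\<rceil>)"
    using K by (simp only: pos_divide_le_eq mult.commute)
  show "\<forall>(j, k) \<in> pairs n. nat \<lceil>real (dem L j0 k0) / K\<rceil> \<le> dem L j k"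
  proof clarify
    fix j k assume "(j, k) \<in> pairs n"
    then have jk: "j \<in> {1..n}" "k \<in> {1..n}" "j \<noteq> k"
      by (auto simp: mem_pairs_iff)
    have "real (dem L j0 k0) / real (dem L j k) \<le> K"
      using qu jk jk0 unfolding quasi_uniform_def by blast
    then have "real (dem L j0 k0) / K \<le> real (dem L j k)"
      using pos[OF jk] K by (simp add: field_simps)
    then show "nat \<lceil>real (dem L j0 k0) / K\<rceil> \<le> dem L j k"
      by simp
  qed
qed

lemma quasi_uniform_demand_bounds:
  assumes n: "2 \<le> n" and K: "0 < K" and qu: "quasi_uniform n K L"
    and d: "d = Max {dem L j k | j k. j \<in> {1..n} \<and> k \<in> {1..n} \<and> j \<noteq> k}"
  obtains D where "1 \<le> D" "real d \<le> K * real D" "\<forall>(j, k) \<in> pairs n. D \<le> dem L j k"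
    "\<forall>(j, k) \<in> pairs n. dem L j k \<le> d" "0 < d"
proof -
  note dem_le = Max_dem_bounds[OF n d]
  obtain j0 k0 where jk0: "j0 \<in> {1..n}" "k0 \<in> {1..n}" "j0 \<noteq> k0" "dem L j0 k0 = d"
    using dem_le(2) by blast
  obtain D where D: "1 \<le> D" "real (dem L j0 k0) \<le> K * real D" "\<forall>(j, k) \<in> pairs n. D \<le> dem L j k"
    by (rule quasi_uniform_lower_demand[OF qu K jk0(1-3)]) iprover
  have "(1, 2) \<in> pairs n"
    using n by (simp add: mem_pairs_iff)
  then have "D \<le> dem L 1 2" "dem L 1 2 \<le> d"
    using D(3) dem_le(1) by auto
  with D(1) have "0 < d"
    by simp
  with D jk0(4) dem_le(1) show thesis
    by (intro that) simp_all
qed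

lemma min_cost_lower_bounds:
  assumes F: "feasible n c (dem L) R" and n: "2 \<le> n" and c: "0 < c"
    and D: "1 \<le> D" "\<forall>(j, k) \<in> pairs n. D \<le> dem L j k"
  shows "n \<le> min_cost n c L" and "card (pairs n) * D \<le> min_cost n c L * c"
    and "(card (pairs n) * D)\<^sup>2 \<le> 8 * (min_cost n c L)\<^sup>2 * c * D"
proof -
  obtain R0 where R0: "feasible n c (dem L) R0" "cost n R0 = min_cost n c L"
    using LeastI_ex[of "\<lambda>x. \<exists>R. feasible n c (dem L) R \<and> cost n R = x"] F
    unfolding min_cost_def by blast
  obtain R1 where R1: "feasible n c (\<lambda>j k. D) R1" "cost n R1 \<le> cost n R0"
    using feasible_reduce[OF R0(1) D(2)] by blast
  have "\<forall>(j, k) \<in> pairs n. 1 \<le> dem L j k"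
    using D by auto
  with card_le_cost[OF R0(1) n] R0(2) show "n \<le> min_cost n c L"
    by simp
  have m: "cost n R1 \<le> min_cost n c L"
    using R0(2) R1(2) by simp
  show "card (pairs n) * D \<le> min_cost n c L * c"
    using uniform_cost_lower_bound[OF R1(1), of 0] mult_le_mono1[OF m, of c] by (simp add: le_trans)
  have "(cost n R1)\<^sup>2 \<le> (min_cost n c L)\<^sup>2"
    using m by (rule power_mono) simp
  then have "8 * (cost n R1)\<^sup>2 * c * D \<le> 8 * (min_cost n c L)\<^sup>2 * c * D"
    by simp
  with uniform_cost_lower_bound_sq[OF R1(1)]
  show "(card (pairs n) * D)\<^sup>2 \<le> 8 * (min_cost n c L)\<^sup>2 * c * D"
    by (rule le_trans)
qed

theorem corollary2:
  fixes n c :: nat and L :: "(nat \<times> nat) list" and K :: real and R :: routing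
  assumes "valid_instance n c L"
    and "K \<ge> 1"
    and "quasi_uniform n K L"
    and "d = Max {dem L j k | j k. j \<in> {1..n} \<and> k \<in> {1..n} \<and> j \<noteq> k}"
    and "algA n c d R"
  shows "feasible n c (\<lambda>j k. d) R \<and>
         (\<exists>R'. reduces R' R \<and> feasible n c (dem L) R' \<and> cost n R' \<le> cost n R) \<and>
         real (cost n R) \<le> max (2 * K) (12 * sqrt (2 * K)) * real (min_cost n c L)"
proof -
  have n: "2 \<le> n" and c: "0 < c"
    using assms(1) unfolding valid_instance_def by auto
  have "0 < K"
    using assms(2) by simp
  then obtain D where D: "1 \<le> D" "real d \<le> K * real D" "\<forall>(j, k) \<in> pairs n. D \<le> dem L j k"
    and dem_le: "\<forall>(j, k) \<in> pairs n. dem L j k \<le> d" and "0 < d"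
    by (rule quasi_uniform_demand_bounds[OF n _ assms(3,4)]) iprover
  have feas: "feasible n c (\<lambda>j k. d) R"
    by (rule algA_feasible[OF assms(5) c \<open>0 < d\<close> n])
  moreover obtain R' where R': "reduces R' R" "feasible n c (dem L) R'" "cost n R' \<le> cost n R"
    using feasible_reduce[OF feas dem_le] by blast
  moreover have "real (cost n R) \<le> max (2 * K) (12 * sqrt (2 * K)) * real (min_cost n c L)"
    by (intro algA_cost_le[OF assms(5) c \<open>0 < d\<close> n assms(2) D(1,2)]
        min_cost_lower_bounds[OF R'(2) n c D(1,3)])
  ultimately show ?thesis
    by blast
qed

end
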